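(* For every $f\in C_b^*$ there is a sequence $(u_n)\subset K$ such that $u_n\to f$ pointwise on $\mathbb R\times H$ and $\sup_{n,t,x}|u_n(t,x)|\le1+\sup_{t,x}|f(t,x)|$.
   Context: $H$ is a real separable Hilbert space, $T>0$, and $D(A^* )$ is a dense linear subspace of $H$ (the common domain of the adjoint operators $A^*(t)$). $K$ is the set of real parts of elements of the complex linear span of the functions $(t,x)\mapsto\Phi(t)e^{i\langle x,h(t)\rangle}$ on $\mathbb R\times H$, where $\Phi\in C^1(\mathbb R,\mathbb R)$ is $T$-periodic and $h\in C^1(\mathbb R,H)$ is $T$-periodic with values in $D(A^* )$. $C_b^*$ is the set of continuous bounded $f:\mathbb R\times H\to\mathbb R$ that are $T$-periodic in the first variable. *)

theory Defs
  imports "HOL-Analysis.Analysis"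
begin

definition periodic_fun :: "real \<Rightarrow> (real \<Rightarrow> 'a) \<Rightarrow> bool" where
  "periodic_fun T g \<longleftrightarrow> (\<forall>t. g (t + T) = g t)"

definition C1_fun :: "(real \<Rightarrow> 'a::real_normed_vector) \<Rightarrow> bool" where
  "C1_fun g \<longleftrightarrow> (\<exists>g'. (\<forall>t. (g has_vector_derivative g' t) (at t)) \<and> continuous_on UNIV g')"

definition K_gen :: "real \<Rightarrow> 'h::real_inner set \<Rightarrow> (real \<times> 'h \<Rightarrow> complex) set" where
  "K_gen T D = {(\<lambda>(t,x). complex_of_real ((Phi::real \<Rightarrow> real) t) * exp (\<i> * complex_of_real (inner x (h t)))) | Phi h.
      C1_fun Phi \<and> periodic_fun T Phi \<and> C1_fun h \<and> periodic_fun T h \<and> (\<forall>t. h t \<in> D)}"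

text \<open>K: real parts of elements of the complex linear span of the generators
  (written out as finite complex linear combinations).\<close>
definition K_set :: "real \<Rightarrow> 'h::real_inner set \<Rightarrow> (real \<times> 'h \<Rightarrow> real) set" where
  "K_set T D = {(\<lambda>p. Re (\<Sum>j<n. c j * g j p)) | (n::nat) (c::nat \<Rightarrow> complex) g.
      (\<forall>j<n. g j \<in> K_gen T D)}"

definition Cb_star :: "real \<Rightarrow> (real \<times> 'h::real_normed_vector \<Rightarrow> real) set" where
  "Cb_star T = {f. continuous_on UNIV f \<and> bounded (range f) \<and> (\<forall>t x. f (t + T, x) = f (t, x))}"

end

theory Submission
  imports Defs
begin

text \<open>
  For a subspace \<open>A \<subseteq> D\<close>, the real parts of complex combinations of the functions
  \<open>\<Phi>(t) exp(i\<langle>x, a\<rangle>)\<close> with \<open>a \<in> A\<close> fixed in time form an algebra of continuous, bounded,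
  \<open>T\<close>-periodic functions inside \<open>K\<close>, which depend on \<open>x\<close> only through the inner products
  \<open>\<langle>x, a\<rangle>\<close>, \<open>a \<in> A\<close>. On \<open>S \<times> C\<close>, with \<open>S\<close> a compact time set inside a window shorter than
  the period and \<open>C \<subseteq> A\<close> compact, this algebra separates points, so Stone--Weierstrass and
  composition with a polynomial approximating a clamping map give approximations of \<open>f\<close>
  bounded by \<open>sup |f| + 1\<close>. Two such window approximations, glued by the partition of unity
  \<open>(1 \<mp> cos (2\<pi>t/T))/2\<close>, approximate \<open>f\<close> uniformly in \<open>t\<close> on \<open>C\<close>. Finally a dense
  sequence in \<open>D\<close> is orthonormalised by Gram--Schmidt; the spans \<open>A\<^sub>n\<close> of its first \<open>n\<close>
  members, the orthogonal projections \<open>P\<^sub>n\<close> and compact coefficient boxes \<open>C\<^sub>n\<close> satisfy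
  \<open>P\<^sub>n x \<rightarrow> x\<close> and eventually \<open>P\<^sub>n x \<in> C\<^sub>n\<close>. Choosing \<open>u\<^sub>n\<close> within \<open>1/(n+1)\<close> of \<open>f\<close>
  on \<open>\<real> \<times> C\<^sub>n\<close> gives \<open>u\<^sub>n(t, x) = u\<^sub>n(t, P\<^sub>n x) \<rightarrow> f(t, x)\<close>.
\<close>

section \<open>The trigonometric algebra\<close>

lemma C1_fun_continuous: "C1_fun f \<Longrightarrow> continuous_on UNIV f"
  unfolding C1_fun_def
  by (metis continuous_at_imp_continuous_on has_vector_derivative_continuous)

lemma C1_fun_const: "C1_fun (\<lambda>t. c)"
  unfolding C1_fun_def by (rule exI[of _ "\<lambda>t. 0"]) (auto intro: derivative_eq_intros)

lemma C1_fun_mult: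
  fixes f g :: "real \<Rightarrow> real"
  assumes "C1_fun f" "C1_fun g"
  shows "C1_fun (\<lambda>t. f t * g t)"
proof -
  obtain f' where f': "\<And>t. (f has_real_derivative f' t) (at t)" "continuous_on UNIV f'"
    using assms(1) by (auto simp: C1_fun_def has_real_derivative_iff_has_vector_derivative)
  obtain g' where g': "\<And>t. (g has_real_derivative g' t) (at t)" "continuous_on UNIV g'"
    using assms(2) by (auto simp: C1_fun_def has_real_derivative_iff_has_vector_derivative)
  have "((\<lambda>t. f t * g t) has_real_derivative f' t * g t + g' t * f t) (at t)" for t
    using f'(1) g'(1) by (rule DERIV_mult)
  moreover have "continuous_on UNIV (\<lambda>t. f' t * g t + g' t * f t)"
    using f'(2) g'(2) C1_fun_continuous[OF assms(1)] C1_fun_continuous[OF assms(2)]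
    by (intro continuous_intros)
  ultimately show ?thesis
    unfolding C1_fun_def has_real_derivative_iff_has_vector_derivative
    by (intro exI[of _ "\<lambda>t. f' t * g t + g' t * f t"]) blast
qed

lemma C1_fun_cos: "C1_fun (\<lambda>t. cos (w * t))"
  unfolding C1_fun_def has_real_derivative_iff_has_vector_derivative[symmetric]
  by (intro exI[of _ "\<lambda>t. - sin (w * t) * w"] conjI allI continuous_intros)
     (auto intro!: derivative_eq_intros)

lemma C1_fun_sin: "C1_fun (\<lambda>t. sin (w * t))"
  unfolding C1_fun_def has_real_derivative_iff_has_vector_derivative[symmetric]
  by (intro exI[of _ "\<lambda>t. cos (w * t) * w"] conjI allI continuous_intros)
     (auto intro!: derivative_eq_intros)

lemma periodic_fun_int_shift:
  assumes "periodic_fun T g"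
  shows "g (t + of_int k * T) = g t"
proof (induction k rule: int_induct[where k = 0])
  case (step1 i)
  have "g (t + of_int (i + 1) * T) = g ((t + of_int i * T) + T)" by (simp add: algebra_simps)
  then show ?case using step1 assms by (simp add: periodic_fun_def)
next
  case (step2 i)
  have "g (t + of_int i * T) = g ((t + of_int (i - 1) * T) + T)" by (simp add: algebra_simps)
  then show ?case using step2 assms by (simp add: periodic_fun_def)
qed simp

lemma periodic_representative:
  fixes T t \<alpha> :: real
  assumes "T > 0"
  obtains k :: int where "t + of_int k * T \<in> {\<alpha>..<\<alpha> + T}"
proof
  define k where "k = \<lfloor>(t - \<alpha>) / T\<rfloor>"
  have "of_int k \<le> (t - \<alpha>) / T" "(t - \<alpha>) / T < of_int k + 1"
    unfolding k_def by linarith+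
  then have "of_int k * T \<le> t - \<alpha>" "t - \<alpha> < of_int k * T + T"
    using assms by (auto simp: field_simps)
  then show "t + of_int (- k) * T \<in> {\<alpha>..<\<alpha> + T}" by auto
qed

lemma periodic_fun_const: "periodic_fun T (\<lambda>t. c)"
  unfolding periodic_fun_def by simp

lemma periodic_fun_mult: "periodic_fun T f \<Longrightarrow> periodic_fun T g \<Longrightarrow> periodic_fun T (\<lambda>t. f t * g t)"
  unfolding periodic_fun_def by simp

lemma periodic_fun_cos: "T \<noteq> 0 \<Longrightarrow> periodic_fun T (\<lambda>t. cos (2 * pi / T * t))"
  and periodic_fun_sin: "T \<noteq> 0 \<Longrightarrow> periodic_fun T (\<lambda>t. sin (2 * pi / T * t))"
proof -
  assume "T \<noteq> 0"
  then have "2 * pi / T * (t + T) = 2 * pi / T * t + 2 * pi" for t by (simp add: field_simps)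
  then show "periodic_fun T (\<lambda>t. cos (2 * pi / T * t))" "periodic_fun T (\<lambda>t. sin (2 * pi / T * t))"
    unfolding periodic_fun_def by simp_all
qed

text \<open>A continuous periodic function is bounded, by compactness of one period.\<close>
lemma periodic_fun_bounded:
  fixes g :: "real \<Rightarrow> real"
  assumes "T > 0" "periodic_fun T g" "continuous_on UNIV g"
  obtains B where "\<And>t. \<bar>g t\<bar> \<le> B"
proof -
  have "compact (g ` {0..T})"
    using assms(3) by (intro compact_continuous_image) (auto intro: continuous_on_subset)
  then obtain B where B: "\<And>y. y \<in> g ` {0..T} \<Longrightarrow> \<bar>y\<bar> \<le> B"
    using compact_imp_bounded bounded_real by metis
  have "\<bar>g t\<bar> \<le> B" for t
  proof -
    obtain k :: int where "t + of_int k * T \<in> {0..<0 + T}"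
      using periodic_representative[OF assms(1)] .
    moreover have "g (t + of_int k * T) = g t" using periodic_fun_int_shift[OF assms(2)] .
    ultimately have "g t \<in> g ` {0..T}" by (metis atLeastLessThan_iff add_0 atLeastAtMost_iff
      image_eqI less_imp_le)
    then show ?thesis by (rule B)
  qed
  then show thesis by (rule that)
qed

definition lincomb :: "(complex \<times> ('a \<Rightarrow> complex)) list \<Rightarrow> 'a \<Rightarrow> complex" where
  "lincomb L p = (\<Sum>(c, g)\<leftarrow>L. c * g p)"

definition cspan :: "('a \<Rightarrow> complex) set \<Rightarrow> ('a \<Rightarrow> complex) set" where
  "cspan G = {lincomb L | L. snd ` set L \<subseteq> G}"

lemma lincomb_Nil [simp]: "lincomb [] p = 0"
  and lincomb_Cons [simp]: "lincomb ((c, g) # L) p = c * g p + lincomb L p"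
  and lincomb_append [simp]: "lincomb (L1 @ L2) p = lincomb L1 p + lincomb L2 p"
  by (simp_all add: lincomb_def)

lemma lincomb_nth: "lincomb L p = (\<Sum>j<length L. fst (L ! j) * snd (L ! j) p)"
  by (simp add: lincomb_def sum_list_sum_nth atLeast0LessThan case_prod_unfold)

lemma cspanI: "snd ` set L \<subseteq> G \<Longrightarrow> (\<And>p. F p = lincomb L p) \<Longrightarrow> F \<in> cspan G"
  unfolding cspan_def by (auto intro!: exI[of _ L])

lemma cspan_induct [consumes 1, case_names zero add]:
  assumes "F \<in> cspan G" "P (\<lambda>p. 0)"
    and "\<And>c g F. g \<in> G \<Longrightarrow> P F \<Longrightarrow> P (\<lambda>p. c * g p + F p)"
  shows "P F"
proof -
  obtain L where L: "snd ` set L \<subseteq> G" "F = lincomb L"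
    using assms(1) by (auto simp: cspan_def)
  have "P (lincomb L)" using L(1)
  proof (induction L)
    case Nil then show ?case using assms(2) by (simp add: lincomb_def)
  next
    case (Cons cg L)
    then show ?case using assms(3)[of "snd cg" "lincomb L" "fst cg"]
      by (cases cg) (simp add: fun_eq_iff)
  qed
  then show ?thesis using L(2) by simp
qed

lemma cspan_const_mult_gen: "g \<in> G \<Longrightarrow> (\<lambda>p. c * g p) \<in> cspan G"
  by (rule cspanI[of "[(c, g)]"]) auto

lemma cspan_add:
  assumes "F \<in> cspan G" "H \<in> cspan G"
  shows "(\<lambda>p. F p + H p) \<in> cspan G"
proof -
  obtain L1 L2 where "snd ` set L1 \<subseteq> G" "F = lincomb L1" "snd ` set L2 \<subseteq> G" "H = lincomb L2"
    using assms by (auto simp: cspan_def)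
  then show ?thesis by (intro cspanI[of "L1 @ L2"]) auto
qed

lemma cspan_scale:
  assumes "F \<in> cspan G"
  shows "(\<lambda>p. c * F p) \<in> cspan G"
proof -
  obtain L where L: "snd ` set L \<subseteq> G" "F = lincomb L"
    using assms by (auto simp: cspan_def)
  have "lincomb (map (\<lambda>(d, g). (c * d, g)) L) p = c * lincomb L p" for p
    by (induction L) (auto simp: algebra_simps)
  moreover have "snd ` set (map (\<lambda>(d, g). (c * d, g)) L) \<subseteq> G" using L(1) by auto
  ultimately show ?thesis using L(2) by (intro cspanI[of "map (\<lambda>(d, g). (c * d, g)) L"]) auto
qed

lemma cspan_mult:
  assumes mult: "\<And>g h. g \<in> G \<Longrightarrow> h \<in> G \<Longrightarrow> (\<lambda>p. g p * h p) \<in> G"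
    and "F \<in> cspan G" "H \<in> cspan G"
  shows "(\<lambda>p. F p * H p) \<in> cspan G"
proof -
  obtain L1 L2 where L: "snd ` set L1 \<subseteq> G" "F = lincomb L1" "snd ` set L2 \<subseteq> G" "H = lincomb L2"
    using assms(2,3) by (auto simp: cspan_def)
  define L where "L = concat (map (\<lambda>(c, g). map (\<lambda>(d, h). (c * d, \<lambda>p. g p * h p)) L2) L1)"
  have row: "lincomb (map (\<lambda>(d, h). (c * d, \<lambda>p. g p * h p)) L2) p = c * g p * lincomb L2 p" for c g p
    by (induction L2) (auto simp: algebra_simps)
  have "lincomb L p = lincomb L1 p * lincomb L2 p" for p
    unfolding L_def by (induction L1) (auto simp: row algebra_simps)
  moreover have "snd ` set L \<subseteq> G" using L(1,3) mult unfolding L_def by force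
  ultimately show ?thesis using L(2,4) by (intro cspanI) auto
qed

lemma cspan_cnj:
  assumes cnj_gen: "\<And>g. g \<in> G \<Longrightarrow> (\<lambda>p. cnj (g p)) \<in> G" and "F \<in> cspan G"
  shows "(\<lambda>p. cnj (F p)) \<in> cspan G"
proof -
  obtain L where L: "snd ` set L \<subseteq> G" "F = lincomb L"
    using assms(2) by (auto simp: cspan_def)
  define L' where "L' = map (\<lambda>(c, g). (cnj c, \<lambda>p. cnj (g p))) L"
  have "lincomb L' p = cnj (lincomb L p)" for p unfolding L'_def by (induction L) auto
  moreover have "snd ` set L' \<subseteq> G" using L(1) cnj_gen unfolding L'_def by force
  ultimately show ?thesis using L(2) by (intro cspanI) auto
qed

text \<open>For \<open>A \<subseteq> D\<close> this is a subset of \<open>K\<close>; for a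
  subspace \<open>A\<close> it is an algebra of functions.\<close>
definition trig_gen :: "real \<Rightarrow> 'h::real_inner set \<Rightarrow> (real \<times> 'h \<Rightarrow> complex) set" where
  "trig_gen T A = {(\<lambda>(t, x). complex_of_real ((Phi :: real \<Rightarrow> real) t) * exp (\<i> * complex_of_real (inner x a)))
      | Phi a. C1_fun Phi \<and> periodic_fun T Phi \<and> a \<in> A}"

definition trig_alg :: "real \<Rightarrow> 'h::real_inner set \<Rightarrow> (real \<times> 'h \<Rightarrow> real) set" where
  "trig_alg T A = {(\<lambda>p. Re (F p)) | F. F \<in> cspan (trig_gen T A)}"

lemma trig_genI:
  "C1_fun Phi \<Longrightarrow> periodic_fun T Phi \<Longrightarrow> a \<in> A \<Longrightarrow>
    (\<lambda>(t, x). complex_of_real (Phi t) * exp (\<i> * complex_of_real (inner x a))) \<in> trig_gen T A"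
  unfolding trig_gen_def by blast

lemma trig_genE:
  assumes "g \<in> trig_gen T A"
  obtains Phi a where "C1_fun Phi" "periodic_fun T Phi" "a \<in> A"
    "g = (\<lambda>(t, x). complex_of_real (Phi t) * exp (\<i> * complex_of_real (inner x a)))"
  using assms unfolding trig_gen_def by blast

text \<open>Generators are closed under products (frequencies add) and conjugation (frequency negated).\<close>
lemma trig_gen_mult:
  assumes A: "subspace A" and "g \<in> trig_gen T A" "h \<in> trig_gen T A"
  shows "(\<lambda>p. g p * h p) \<in> trig_gen T A"
proof -
  obtain P1 a1 where 1: "C1_fun P1" "periodic_fun T P1" "a1 \<in> A"
    "g = (\<lambda>(t, x). complex_of_real (P1 t) * exp (\<i> * complex_of_real (inner x a1)))"
    using assms(2) by (rule trig_genE)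
  obtain P2 a2 where 2: "C1_fun P2" "periodic_fun T P2" "a2 \<in> A"
    "h = (\<lambda>(t, x). complex_of_real (P2 t) * exp (\<i> * complex_of_real (inner x a2)))"
    using assms(3) by (rule trig_genE)
  have "(\<lambda>(t, x). complex_of_real (P1 t * P2 t) * exp (\<i> * complex_of_real (inner x (a1 + a2))))
      \<in> trig_gen T A"
    using 1 2 A by (intro trig_genI C1_fun_mult periodic_fun_mult subspace_add)
  moreover have "(\<lambda>p. g p * h p) =
      (\<lambda>(t, x). complex_of_real (P1 t * P2 t) * exp (\<i> * complex_of_real (inner x (a1 + a2))))"
    by (auto simp: fun_eq_iff 1(4) 2(4) inner_add_right distrib_left exp_add[symmetric] algebra_simps)
  ultimately show ?thesis by simp
qed

lemma trig_gen_cnj: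
  assumes A: "subspace A" and "g \<in> trig_gen T A"
  shows "(\<lambda>p. cnj (g p)) \<in> trig_gen T A"
proof -
  obtain P a where 1: "C1_fun P" "periodic_fun T P" "a \<in> A"
    "g = (\<lambda>(t, x). complex_of_real (P t) * exp (\<i> * complex_of_real (inner x a)))"
    using assms(2) by (rule trig_genE)
  have "(\<lambda>(t, x). complex_of_real (P t) * exp (\<i> * complex_of_real (inner x (- a)))) \<in> trig_gen T A"
    using 1 A by (intro trig_genI subspace_neg)
  moreover have "(\<lambda>p. cnj (g p)) =
      (\<lambda>(t, x). complex_of_real (P t) * exp (\<i> * complex_of_real (inner x (- a))))"
    by (auto simp: fun_eq_iff 1(4) exp_cnj)
  ultimately show ?thesis by simp
qed

lemma trig_gen_time:
  "C1_fun P \<Longrightarrow> periodic_fun T P \<Longrightarrow> subspace A \<Longrightarrow> (\<lambda>p. complex_of_real (P (fst p))) \<in> trig_gen T A"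
  using trig_genI[of P T 0 A] by (simp add: subspace_0 case_prod_unfold)

lemma trig_gen_space:
  "a \<in> A \<Longrightarrow> (\<lambda>p. exp (\<i> * complex_of_real (inner (snd p) a))) \<in> trig_gen T A"
  using trig_genI[OF C1_fun_const periodic_fun_const, of a A 1] by (simp add: case_prod_unfold)

lemma trig_gen_props:
  assumes "T > 0" "g \<in> trig_gen T A"
  shows "continuous_on UNIV g" "\<exists>B. \<forall>p. norm (g p) \<le> B" "periodic_fun T (\<lambda>t. g (t, x))"
    "\<forall>a\<in>A. inner x a = inner y a \<Longrightarrow> g (t, x) = g (t, y)"
proof -
  obtain P a where g: "C1_fun P" "periodic_fun T P" "a \<in> A"
    "g = (\<lambda>(t, x). complex_of_real (P t) * exp (\<i> * complex_of_real (inner x a)))"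
    using assms(2) by (rule trig_genE)
  have "continuous_on UNIV (\<lambda>p. complex_of_real (P (fst p)) * exp (\<i> * complex_of_real (inner (snd p) a)))"
    by (intro continuous_intros continuous_on_compose2[OF C1_fun_continuous[OF g(1)]]) auto
  then show "continuous_on UNIV g" by (simp add: g(4) case_prod_beta)
  obtain B where "\<And>t. \<bar>P t\<bar> \<le> B"
    using periodic_fun_bounded[OF assms(1) g(2) C1_fun_continuous[OF g(1)]] by blast
  then show "\<exists>B. \<forall>p. norm (g p) \<le> B" by (auto simp: g(4) norm_mult case_prod_beta)
  show "periodic_fun T (\<lambda>t. g (t, x))" using g(2) by (simp add: g(4) periodic_fun_def)
  show "\<forall>a\<in>A. inner x a = inner y a \<Longrightarrow> g (t, x) = g (t, y)" using g(3) by (simp add: g(4))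
qed

text \<open>A generator with frequency \<open>a \<in> D\<close> is a generator of \<open>K\<close>, with constant \<open>h(t) = a\<close>.\<close>
lemma trig_gen_subset_K_gen: "A \<subseteq> D \<Longrightarrow> trig_gen T A \<subseteq> K_gen T D"
proof
  fix g assume AD: "A \<subseteq> D" and "g \<in> trig_gen T A"
  then obtain P a where g: "C1_fun P" "periodic_fun T P" "a \<in> A"
    "g = (\<lambda>(t, x). complex_of_real (P t) * exp (\<i> * complex_of_real (inner x a)))"
    by (auto elim: trig_genE)
  have "C1_fun (\<lambda>t::real. a)" "periodic_fun T (\<lambda>t::real. a)" "\<forall>t::real. a \<in> D"
    using AD g(3) by (auto simp: C1_fun_const periodic_fun_const)
  then show "g \<in> K_gen T D" unfolding K_gen_def mem_Collect_eq
    by (intro exI[of _ P] exI[of _ "\<lambda>t. a"]) (simp add: g)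
qed

lemma cspan_trig_props:
  assumes "T > 0" "F \<in> cspan (trig_gen T A)"
  shows "continuous_on UNIV F" "\<exists>B. \<forall>p. norm (F p) \<le> B" "periodic_fun T (\<lambda>t. F (t, x))"
    "\<forall>a\<in>A. inner x a = inner y a \<Longrightarrow> F (t, x) = F (t, y)"
proof -
  show "continuous_on UNIV F" using assms(2)
  proof (induction rule: cspan_induct)
    case (add c g F)
    then show ?case using trig_gen_props(1)[OF assms(1) add(1)] by (intro continuous_intros)
  qed simp
  show "\<exists>B. \<forall>p. norm (F p) \<le> B" using assms(2)
  proof (induction rule: cspan_induct)
    case (add c g F)
    obtain B1 B2 where "\<forall>p. norm (g p) \<le> B1" "\<forall>p. norm (F p) \<le> B2"
      using add trig_gen_props(2)[OF assms(1)] by metis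
    then have "norm (c * g p + F p) \<le> norm c * B1 + B2" for p
      by (metis norm_mult norm_triangle_mono mult_left_mono norm_ge_zero)
    then show ?case by blast
  qed auto
  show "periodic_fun T (\<lambda>t. F (t, x))" using assms(2)
    by (induction rule: cspan_induct)
       (auto simp: periodic_fun_def dest: trig_gen_props(3)[OF assms(1), of _ _ x])
  show "\<forall>a\<in>A. inner x a = inner y a \<Longrightarrow> F (t, x) = F (t, y)" using assms(2)
    by (induction rule: cspan_induct) (auto dest: trig_gen_props(4)[OF assms(1)])
qed

lemma trig_algI: "F \<in> cspan (trig_gen T A) \<Longrightarrow> (\<lambda>p. Re (F p)) \<in> trig_alg T A"
  unfolding trig_alg_def by blast

lemma trig_algE:
  assumes "v \<in> trig_alg T A"
  obtains F where "F \<in> cspan (trig_gen T A)" "v = (\<lambda>p. Re (F p))"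
  using assms unfolding trig_alg_def by blast

lemma trig_alg_add:
  assumes "v \<in> trig_alg T A" "w \<in> trig_alg T A"
  shows "(\<lambda>p. v p + w p) \<in> trig_alg T A"
proof -
  obtain F G where "F \<in> cspan (trig_gen T A)" "G \<in> cspan (trig_gen T A)"
    "v = (\<lambda>p. Re (F p))" "w = (\<lambda>p. Re (G p))"
    using assms by (metis trig_algE)
  then show ?thesis using trig_algI[OF cspan_add[of F _ G]] by simp
qed

text \<open>Closure under products uses \<open>Re F \<cdot> Re G = Re ((F G + F \<cdot> cnj G) / 2)\<close>; generators are
  closed under products and conjugation because \<open>A\<close> is a subspace.\<close>
lemma trig_alg_mult:
  assumes A: "subspace A" and "v \<in> trig_alg T A" "w \<in> trig_alg T A"
  shows "(\<lambda>p. v p * w p) \<in> trig_alg T A"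
proof -
  obtain F G where FG: "F \<in> cspan (trig_gen T A)" "G \<in> cspan (trig_gen T A)"
    "v = (\<lambda>p. Re (F p))" "w = (\<lambda>p. Re (G p))"
    using assms(2,3) by (metis trig_algE)
  have "(\<lambda>p. (1/2) * (F p * G p + F p * cnj (G p))) \<in> cspan (trig_gen T A)"
    using FG trig_gen_mult[OF A] trig_gen_cnj[OF A] by (intro cspan_scale cspan_add cspan_mult cspan_cnj)
  moreover have "Re ((1/2) * (F p * G p + F p * cnj (G p))) = Re (F p) * Re (G p)" for p
    by (simp add: field_simps)
  ultimately show ?thesis using FG trig_algI by fastforce
qed

lemma trig_alg_time:
  "C1_fun P \<Longrightarrow> periodic_fun T P \<Longrightarrow> subspace A \<Longrightarrow> (\<lambda>p. P (fst p)) \<in> trig_alg T A"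
  using trig_algI[OF cspan_const_mult_gen[OF trig_gen_time[of P T A], of 1]] by simp

lemma trig_alg_const: "subspace A \<Longrightarrow> (\<lambda>p. c) \<in> trig_alg T A"
  using trig_alg_time[of "\<lambda>t. c" T A] by (simp add: C1_fun_const periodic_fun_const)

lemma trig_alg_cos_space: "a \<in> A \<Longrightarrow> (\<lambda>p. cos (inner (snd p) a)) \<in> trig_alg T A"
  using trig_algI[OF cspan_const_mult_gen[OF trig_gen_space[of a A T], of 1]] by (simp add: Re_exp)

lemma trig_alg_sin_space: "a \<in> A \<Longrightarrow> (\<lambda>p. sin (inner (snd p) a)) \<in> trig_alg T A"
  using trig_algI[OF cspan_const_mult_gen[OF trig_gen_space[of a A T], of "- \<i>"]]
  by (simp add: Re_exp Im_exp)

lemma trig_alg_poly: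
  assumes A: "subspace A" and q: "real_polynomial_function q" and v: "v \<in> trig_alg T A"
  shows "(\<lambda>p. q (v p)) \<in> trig_alg T A"
  using q
proof (induction q)
  case (linear f)
  then obtain c where "f = (\<lambda>x. x * c)" by (auto simp: real_bounded_linear)
  then show ?case using trig_alg_mult[OF A v trig_alg_const[OF A]] by simp
next
  case (const c) then show ?case using trig_alg_const[OF A] by simp
next
  case (add f g) then show ?case using trig_alg_add by blast
next
  case (mult f g) then show ?case using trig_alg_mult[OF A] by blast
qed

lemma trig_alg_props:
  assumes "T > 0" "v \<in> trig_alg T A"
  shows "continuous_on UNIV v" "\<exists>B. \<forall>p. \<bar>v p\<bar> \<le> B" "periodic_fun T (\<lambda>t. v (t, x))"
    "\<forall>a\<in>A. inner x a = inner y a \<Longrightarrow> v (t, x) = v (t, y)"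
proof -
  obtain F where F: "F \<in> cspan (trig_gen T A)" "v = (\<lambda>p. Re (F p))"
    using assms(2) by (rule trig_algE)
  note props = cspan_trig_props[OF assms(1) F(1)]
  show "continuous_on UNIV v" using props(1) by (auto simp: F(2) intro: continuous_intros)
  show "\<exists>B. \<forall>p. \<bar>v p\<bar> \<le> B" using props(2) abs_Re_le_cmod order_trans by (metis F(2))
  show "periodic_fun T (\<lambda>t. v (t, x))" using props(3)[of x] by (simp add: F(2) periodic_fun_def)
  show "\<forall>a\<in>A. inner x a = inner y a \<Longrightarrow> v (t, x) = v (t, y)" using props(4) by (metis F(2))
qed

lemma trig_alg_subset_K_set:
  assumes "A \<subseteq> D"
  shows "trig_alg T A \<subseteq> K_set T D"
proof
  fix v assume "v \<in> trig_alg T A"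
  then obtain L where L: "snd ` set L \<subseteq> trig_gen T A" "v = (\<lambda>p. Re (lincomb L p))"
    by (auto elim!: trig_algE simp: cspan_def)
  have "\<forall>j<length L. snd (L ! j) \<in> K_gen T D"
    using L(1) trig_gen_subset_K_gen[OF assms] nth_mem by fastforce
  then show "v \<in> K_set T D" unfolding K_set_def mem_Collect_eq L(2) lincomb_nth
    by (intro exI[of _ "length L"] exI[of _ "\<lambda>j. fst (L ! j)"] exI[of _ "\<lambda>j. snd (L ! j)"]) simp
qed

section \<open>Approximation by the trigonometric algebra\<close>

lemma cos_sin_eq_close:
  fixes a b :: real
  assumes "cos a = cos b" "sin a = sin b" "\<bar>a - b\<bar> < 2 * pi"
  shows "a = b"
proof -
  obtain n :: int where n: "a = b + 2 * pi * n"
    using sin_cos_eq_iff assms(1,2) by metis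
  then have "\<bar>of_int n\<bar> * (2 * pi) < 1 * (2 * pi)"
    using assms(3) by (simp add: abs_mult)
  then have "n = 0" by (simp only: mult_less_cancel_right) auto
  then show ?thesis using n by simp
qed

lemma separate_by_phase:
  assumes "(\<lambda>p. cos (\<phi> p)) \<in> R" "(\<lambda>p. sin (\<phi> p)) \<in> R"
    and "\<phi> p \<noteq> \<phi> q" "\<bar>\<phi> p - \<phi> q\<bar> < 2 * pi"
  shows "\<exists>v\<in>R. v p \<noteq> v q"
proof (cases "cos (\<phi> p) = cos (\<phi> q)")
  case True
  then have "sin (\<phi> p) \<noteq> sin (\<phi> q)" using cos_sin_eq_close assms(3,4) by blast
  then show ?thesis by (rule bexI[where x = "\<lambda>p. sin (\<phi> p)", OF _ assms(2)])
next
  case False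
  then show ?thesis by (rule bexI[where x = "\<lambda>p. cos (\<phi> p)", OF _ assms(1)])
qed

text \<open>On a time window shorter than the period, the algebra separates points: times by
  \<open>cos (2\<pi>t/T)\<close> and \<open>sin (2\<pi>t/T)\<close>, space points of \<open>A\<close> by \<open>cos \<langle>x, b\<rangle>\<close> and \<open>sin \<langle>x, b\<rangle>\<close>
  for \<open>b\<close> a suitable multiple of their difference.\<close>
lemma trig_alg_separates:
  assumes T: "T > 0" and A: "subspace A" and x: "x \<in> A" "x' \<in> A"
    and close: "\<bar>t - t'\<bar> < T" and ne: "(t, x) \<noteq> (t', x')"
  shows "\<exists>v\<in>trig_alg T A. v (t, x) \<noteq> v (t', x')"
proof (cases "t = t'")
  case False
  define w where "w = 2 * pi / T"
  have w: "w > 0" using T by (simp add: w_def)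
  have cos_time: "(\<lambda>p. cos (w * fst p)) \<in> trig_alg T A"
    unfolding w_def using trig_alg_time[OF C1_fun_cos periodic_fun_cos A] T by simp
  have sin_time: "(\<lambda>p. sin (w * fst p)) \<in> trig_alg T A"
    unfolding w_def using trig_alg_time[OF C1_fun_sin periodic_fun_sin A] T by simp
  have "\<bar>w * t - w * t'\<bar> < 2 * pi"
  proof -
    have "\<bar>w * t - w * t'\<bar> = w * \<bar>t - t'\<bar>"
      using w by (simp add: abs_mult right_diff_distrib[symmetric])
    also have "\<dots> < w * T" using w close by simp
    also have "\<dots> = 2 * pi" using T by (simp add: w_def)
    finally show ?thesis .
  qed
  moreover have "w * t \<noteq> w * t'" using False w by simp
  ultimately show ?thesis
    using separate_by_phase[OF cos_time sin_time, of "(t, x)" "(t', x')"] by simp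
next
  case True
  then have "x \<noteq> x'" using ne by simp
  define b where "b = (1 / (norm (x - x'))\<^sup>2) *\<^sub>R (x - x')"
  have "b \<in> A" unfolding b_def using A x by (intro subspace_scale subspace_diff)
  have "inner x b - inner x' b = inner (x - x') b" by (simp add: inner_diff_left)
  also have "\<dots> = 1" using \<open>x \<noteq> x'\<close> by (simp add: b_def power2_norm_eq_inner)
  finally have "inner x b - inner x' b = 1" .
  then show ?thesis
    using separate_by_phase[OF trig_alg_cos_space[OF \<open>b \<in> A\<close>] trig_alg_sin_space[OF \<open>b \<in> A\<close>],
        of "(t, x)" "(t', x')"] pi_gt3 by simp
qed

text \<open>A polynomial that approximates the clamping map \<open>y \<mapsto> max (-M) (min M y)\<close> on a
  bounded interval: composing with it keeps approximations of functions bounded by \<open>M\<close> good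
  while making them almost bounded by \<open>M\<close>.\<close>
lemma clamping_polynomial:
  fixes B M e :: real
  assumes "M \<ge> 0" "e > 0"
  obtains q where "real_polynomial_function q" "\<And>y. \<bar>y\<bar> \<le> B \<Longrightarrow> \<bar>q y\<bar> < M + e"
    "\<And>y z. \<bar>y\<bar> \<le> B \<Longrightarrow> \<bar>z\<bar> \<le> M \<Longrightarrow> \<bar>q y - z\<bar> < \<bar>y - z\<bar> + e"
proof -
  define clamp where "clamp y = max (- M) (min M y)" for y
  have "continuous_on {-B..B} clamp" unfolding clamp_def by (intro continuous_intros)
  then obtain q where q: "real_polynomial_function q" "\<And>y. y \<in> {-B..B} \<Longrightarrow> \<bar>clamp y - q y\<bar> < e"
    using Stone_Weierstrass_real_polynomial_function[OF compact_Icc _ assms(2)] by blast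
  show thesis
  proof
    show "real_polynomial_function q" by (rule q(1))
  next
    fix y assume "\<bar>y\<bar> \<le> B"
    then have "\<bar>clamp y - q y\<bar> < e" by (intro q(2)) auto
    moreover have "\<bar>clamp y\<bar> \<le> M" using assms(1) by (auto simp: clamp_def)
    ultimately show "\<bar>q y\<bar> < M + e" by linarith
    fix z assume "\<bar>z\<bar> \<le> M"
    then have "\<bar>clamp y - z\<bar> \<le> \<bar>y - z\<bar>" by (auto simp: clamp_def)
    with \<open>\<bar>clamp y - q y\<bar> < e\<close> show "\<bar>q y - z\<bar> < \<bar>y - z\<bar> + e" by linarith
  qed
qed

text \<open>Stone--Weierstrass on \<open>S \<times> C\<close>, followed by clamping, gives approximations that are
  bounded by \<open>M + 1\<close> everywhere.\<close>
lemma approx_on_window: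
  fixes f :: "real \<times> 'h::real_inner \<Rightarrow> real"
  assumes T: "T > 0" and A: "subspace A" and S: "compact S" "S \<subseteq> {\<alpha><..<\<alpha> + T}"
    and C: "compact C" "C \<subseteq> A"
    and f: "continuous_on UNIV f" "\<And>p. \<bar>f p\<bar> \<le> M" and e: "e > 0"
  obtains v where "v \<in> trig_alg T A" "\<And>p. \<bar>v p\<bar> \<le> M + 1"
    "\<And>t x. t \<in> S \<Longrightarrow> x \<in> C \<Longrightarrow> \<bar>v (t, x) - f (t, x)\<bar> < e"
proof -
  interpret function_ring_on "trig_alg T A" "S \<times> C"
  proof
    show "compact (S \<times> C)" using S C by (simp add: compact_Times)
    show "continuous_on (S \<times> C) v" if "v \<in> trig_alg T A" for v
      using trig_alg_props(1)[OF T that] continuous_on_subset by blast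
    show "(\<lambda>p. v p + w p) \<in> trig_alg T A" "(\<lambda>p. v p * w p) \<in> trig_alg T A"
      if "v \<in> trig_alg T A" "w \<in> trig_alg T A" for v w
      using that trig_alg_add trig_alg_mult[OF A] by auto
    show "(\<lambda>_. c) \<in> trig_alg T A" for c using trig_alg_const[OF A] .
    show "\<exists>v\<in>trig_alg T A. v p \<noteq> v q" if "p \<in> S \<times> C" "q \<in> S \<times> C" "p \<noteq> q" for p q
    proof -
      obtain t x t' x' where pq: "p = (t, x)" "q = (t', x')" by fastforce
      moreover have "t \<in> {\<alpha><..<\<alpha> + T}" "t' \<in> {\<alpha><..<\<alpha> + T}" using S(2) that(1,2) pq by auto
      then have "\<bar>t - t'\<bar> < T" by auto
      ultimately show ?thesis using that C(2) by (auto intro!: trig_alg_separates[OF T A])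
    qed
  qed
  have M: "M \<ge> 0" using f(2) by (meson abs_ge_zero order_trans)
  obtain g where g: "g \<in> trig_alg T A" "\<forall>p\<in>S \<times> C. \<bar>f p - g p\<bar> < e / 2"
    using Stone_Weierstrass_basic[of f "e / 2"] f(1) e continuous_on_subset by (metis half_gt_zero subset_UNIV)
  obtain B where B: "\<forall>p. \<bar>g p\<bar> \<le> B" using trig_alg_props(2)[OF T g(1)] by blast
  obtain q where q: "real_polynomial_function q" "\<And>y. \<bar>y\<bar> \<le> B \<Longrightarrow> \<bar>q y\<bar> < M + min 1 (e / 2)"
    "\<And>y z. \<bar>y\<bar> \<le> B \<Longrightarrow> \<bar>z\<bar> \<le> M \<Longrightarrow> \<bar>q y - z\<bar> < \<bar>y - z\<bar> + min 1 (e / 2)"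
    using clamping_polynomial[OF M, of "min 1 (e / 2)" B] e by auto
  have min_e: "min 1 (e / 2) \<le> 1" "min 1 (e / 2) \<le> e / 2" by auto
  show thesis
  proof
    show "(\<lambda>p. q (g p)) \<in> trig_alg T A" by (rule trig_alg_poly[OF A q(1) g(1)])
    show "\<bar>q (g p)\<bar> \<le> M + 1" for p
      using q(2)[of "g p"] B min_e(1) by fastforce
    show "\<bar>q (g (t, x)) - f (t, x)\<bar> < e" if "t \<in> S" "x \<in> C" for t x
    proof -
      have "\<bar>q (g (t, x)) - f (t, x)\<bar> < \<bar>g (t, x) - f (t, x)\<bar> + min 1 (e / 2)"
        using q(3) B f(2) by blast
      moreover have "\<bar>g (t, x) - f (t, x)\<bar> < e / 2"
        using g(2) that by (auto simp: abs_minus_commute)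
      ultimately show ?thesis using min_e(2) by linarith
    qed
  qed
qed

text \<open>The two windows on which the weights \<open>(1 \<mp> cos (2\<pi>t/T))/2\<close> of the partition of unity
  used below are not small: each is compact and lies strictly inside a window of length \<open>T\<close>.\<close>
lemma cos_windows:
  assumes T: "T > 0" and \<eta>: "\<eta> > 0"
  defines "\<omega> \<equiv> 2 * pi / T"
  shows "compact ({0..T} \<inter> {t. cos (\<omega> * t) \<le> 1 - \<eta>})"
    "{0..T} \<inter> {t. cos (\<omega> * t) \<le> 1 - \<eta>} \<subseteq> {0<..<0 + T}"
    "compact ({-T/2..T/2} \<inter> {t. -1 + \<eta> \<le> cos (\<omega> * t)})"
    "{-T/2..T/2} \<inter> {t. -1 + \<eta> \<le> cos (\<omega> * t)} \<subseteq> {-T/2<..<-T/2 + T}"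
proof -
  show "compact ({0..T} \<inter> {t. cos (\<omega> * t) \<le> 1 - \<eta>})"
    "compact ({-T/2..T/2} \<inter> {t. -1 + \<eta> \<le> cos (\<omega> * t)})"
    by (intro compact_Int_closed compact_Icc closed_Collect_le continuous_intros)+
  have "\<omega> * T = 2 * pi" "\<omega> * (- T/2) = - pi" "\<omega> * (T/2) = pi"
    using T by (auto simp: \<omega>_def field_simps)
  then show "{0..T} \<inter> {t. cos (\<omega> * t) \<le> 1 - \<eta>} \<subseteq> {0<..<0 + T}"
    "{-T/2..T/2} \<inter> {t. -1 + \<eta> \<le> cos (\<omega> * t)} \<subseteq> {-T/2<..<-T/2 + T}"
    using \<eta> by (auto simp: less_le)
qed

lemma cos_partition_of_unity:
  assumes T: "T > 0" and A: "subspace A"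
  shows "(\<lambda>p. 1/2 + (- 1/2) * cos (2 * pi / T * fst p)) \<in> trig_alg T A"
    "(\<lambda>p. 1/2 + 1/2 * cos (2 * pi / T * fst p)) \<in> trig_alg T A"
    "0 \<le> 1/2 + (- 1/2) * cos (2 * pi / T * t)" "0 \<le> 1/2 + 1/2 * cos (2 * pi / T * t)"
proof -
  have cos_time: "(\<lambda>p. cos (2 * pi / T * fst p)) \<in> trig_alg T A"
    using trig_alg_time[OF C1_fun_cos periodic_fun_cos A] T by simp
  show "(\<lambda>p. 1/2 + (- 1/2) * cos (2 * pi / T * fst p)) \<in> trig_alg T A"
    "(\<lambda>p. 1/2 + 1/2 * cos (2 * pi / T * fst p)) \<in> trig_alg T A"
    by (intro trig_alg_add trig_alg_const[OF A] trig_alg_mult[OF A _ cos_time])+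
  have "-1 \<le> cos (2 * pi / T * t)" "cos (2 * pi / T * t) \<le> 1" by simp_all
  then show "0 \<le> 1/2 + (- 1/2) * cos (2 * pi / T * t)" "0 \<le> 1/2 + 1/2 * cos (2 * pi / T * t)"
    by linarith+
qed

lemma convex_combination_error:
  fixes c1 c2 a b z :: real
  assumes "0 \<le> c1" "0 \<le> c2" "c1 + c2 = 1"
  shows "\<bar>c1 * a + c2 * b - z\<bar> \<le> c1 * \<bar>a - z\<bar> + c2 * \<bar>b - z\<bar>"
proof -
  have "c1 * a + c2 * b - z = c1 * (a - z) + c2 * (b - z)"
    using assms(3) by (simp add: algebra_simps flip: distrib_right)
  then show ?thesis using assms(1,2) by (simp add: abs_mult abs_triangle_ineq[THEN order_trans])
qed

lemma weighted_window_error: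
  fixes v f :: "real \<Rightarrow> real" and Q :: "real \<Rightarrow> bool"
  assumes "T > 0" "periodic_fun T (\<lambda>s. v s - f s)" "periodic_fun T Q"
    and "\<And>s. s \<in> {\<alpha>..<\<alpha> + T} \<Longrightarrow> Q s \<Longrightarrow> \<bar>v s - f s\<bar> < e"
    and "\<not> Q t \<Longrightarrow> c \<le> \<eta>" "0 \<le> c" "0 \<le> e" "0 \<le> \<eta>" "\<bar>v t - f t\<bar> \<le> K"
  shows "c * \<bar>v t - f t\<bar> \<le> c * e + \<eta> * K"
proof -
  have "c \<le> \<eta> \<or> \<bar>v t - f t\<bar> < e"
  proof (cases "Q t")
    case True
    obtain k :: int where "t + of_int k * T \<in> {\<alpha>..<\<alpha> + T}"
      using periodic_representative[OF assms(1)] .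
    moreover have "v (t + of_int k * T) - f (t + of_int k * T) = v t - f t"
      using periodic_fun_int_shift[OF assms(2)] .
    moreover have "Q (t + of_int k * T) = Q t" using periodic_fun_int_shift[OF assms(3)] .
    ultimately show ?thesis using assms(4) True by metis
  qed (use assms(5) in blast)
  then show ?thesis
    using assms(6-9) by (smt (verit, best) abs_ge_zero mult_left_mono mult_mono mult_nonneg_nonneg)
qed

text \<open>Gluing two window approximations with the partition of unity
  \<open>1 = (1 - cos (2\<pi>t/T))/2 + (1 + cos (2\<pi>t/T))/2\<close> gives, for a continuous, bounded,
  \<open>T\<close>-periodic \<open>f\<close>, approximations bounded by \<open>M + 1\<close> that are uniform in time on any
  compact subset \<open>C\<close> of \<open>A\<close>.\<close>
lemma approx_uniform_in_time:
  fixes f :: "real \<times> 'h::real_inner \<Rightarrow> real"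
  assumes T: "T > 0" and A: "subspace A" and C: "compact C" "C \<subseteq> A"
    and f: "continuous_on UNIV f" "\<And>p. \<bar>f p\<bar> \<le> M" "\<And>t x. f (t + T, x) = f (t, x)"
    and e: "e > 0"
  obtains w where "w \<in> trig_alg T A" "\<And>p. \<bar>w p\<bar> \<le> M + 1"
    "\<And>t x. x \<in> C \<Longrightarrow> \<bar>w (t, x) - f (t, x)\<bar> < e"
proof -
  have M: "M \<ge> 0" using f(2) by (meson abs_ge_zero order_trans)
  define \<omega> where "\<omega> = 2 * pi / T"
  define \<eta> where "\<eta> = e / 8 / (2 * M + 1)"
  have "2 * M + 1 > 0" using M by simp
  then have \<eta>: "\<eta> > 0" "\<eta> * (2 * M + 1) = e / 8"
    using e unfolding \<eta>_def by (simp, metis times_divide_eq_left nonzero_mult_div_cancel_right less_irrefl)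
  note windows = cos_windows[OF T, of "2 * \<eta>", folded \<omega>_def]
  obtain v1 where v1: "v1 \<in> trig_alg T A" "\<And>p. \<bar>v1 p\<bar> \<le> M + 1"
    "\<And>t x. t \<in> {0..T} \<inter> {t. cos (\<omega> * t) \<le> 1 - 2 * \<eta>} \<Longrightarrow> x \<in> C \<Longrightarrow> \<bar>v1 (t, x) - f (t, x)\<bar> < e / 2"
    using approx_on_window[OF T A windows(1,2) C f(1,2), of "e / 2"] \<eta> e by auto
  obtain v2 where v2: "v2 \<in> trig_alg T A" "\<And>p. \<bar>v2 p\<bar> \<le> M + 1"
    "\<And>t x. t \<in> {-T/2..T/2} \<inter> {t. -1 + 2 * \<eta> \<le> cos (\<omega> * t)} \<Longrightarrow> x \<in> C \<Longrightarrow>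
      \<bar>v2 (t, x) - f (t, x)\<bar> < e / 2"
    using approx_on_window[OF T A windows(3,4) C f(1,2), of "e / 2"] \<eta> e by auto
  define c1 where "c1 p = 1/2 + (- 1/2) * cos (\<omega> * fst p)" for p :: "real \<times> 'h"
  define c2 where "c2 p = 1/2 + 1/2 * cos (\<omega> * fst p)" for p :: "real \<times> 'h"
  have c: "0 \<le> c1 p" "0 \<le> c2 p" "c1 p + c2 p = 1" for p
    using cos_partition_of_unity(3,4)[OF T A] unfolding c1_def c2_def \<omega>_def by auto
  have c_alg: "c1 \<in> trig_alg T A" "c2 \<in> trig_alg T A"
    using cos_partition_of_unity(1,2)[OF T A] unfolding c1_def c2_def \<omega>_def by auto
  define w where "w p = c1 p * v1 p + c2 p * v2 p" for p
  have "periodic_fun T (\<lambda>t. cos (\<omega> * t))" unfolding \<omega>_def by (rule periodic_fun_cos) (use T in simp)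
  then have periodic_level: "periodic_fun T (\<lambda>t. cos (\<omega> * t) \<le> 1 - 2 * \<eta>)"
    "periodic_fun T (\<lambda>t. -1 + 2 * \<eta> \<le> cos (\<omega> * t))"
    by (simp_all add: periodic_fun_def)
  have error_bound: "\<bar>v p - f p\<bar> \<le> 2 * M + 1" if "\<And>p. \<bar>v p\<bar> \<le> M + 1" for v p
    using that[of p] f(2)[of p] by linarith
  have periodic_error: "periodic_fun T (\<lambda>t. v (t, x) - f (t, x))" if "v \<in> trig_alg T A" for v x
    using trig_alg_props(3)[OF T that, of x] f(3) by (simp add: periodic_fun_def)
  show thesis
  proof
    show "w \<in> trig_alg T A" unfolding w_def
      using c_alg v1(1) v2(1) A by (intro trig_alg_add trig_alg_mult)
    show "\<bar>w p\<bar> \<le> M + 1" for p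
    proof -
      have "\<bar>w p\<bar> \<le> c1 p * \<bar>v1 p\<bar> + c2 p * \<bar>v2 p\<bar>"
        using convex_combination_error[OF c[of p], of "v1 p" "v2 p" 0] by (simp add: w_def)
      also have "\<dots> \<le> c1 p * (M + 1) + c2 p * (M + 1)"
        using c[of p] v1(2)[of p] v2(2)[of p] by (intro add_mono mult_left_mono)
      also have "\<dots> = M + 1" using c(3)[of p] by (simp flip: distrib_right)
      finally show ?thesis .
    qed
    show "\<bar>w (t, x) - f (t, x)\<bar> < e" if x: "x \<in> C" for t x
    proof -
      let ?p = "(t, x)"
      have err1: "c1 ?p * \<bar>v1 ?p - f ?p\<bar> \<le> c1 ?p * (e / 2) + \<eta> * (2 * M + 1)"
        by (rule weighted_window_error[where v = "\<lambda>s. v1 (s, x)" and f = "\<lambda>s. f (s, x)" and \<alpha> = 0,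
              OF T periodic_error[OF v1(1)] periodic_level(1)])
           (use v1(3)[OF _ x] c \<eta> e error_bound[OF v1(2)] in \<open>auto simp: c1_def\<close>)
      have err2: "c2 ?p * \<bar>v2 ?p - f ?p\<bar> \<le> c2 ?p * (e / 2) + \<eta> * (2 * M + 1)"
        by (rule weighted_window_error[where v = "\<lambda>s. v2 (s, x)" and f = "\<lambda>s. f (s, x)" and \<alpha> = "-T/2",
              OF T periodic_error[OF v2(1)] periodic_level(2)])
           (use v2(3)[OF _ x] c \<eta> e error_bound[OF v2(2)] in \<open>auto simp: c2_def\<close>)
      have "\<bar>w ?p - f ?p\<bar> \<le> c1 ?p * \<bar>v1 ?p - f ?p\<bar> + c2 ?p * \<bar>v2 ?p - f ?p\<bar>"
        unfolding w_def by (rule convex_combination_error[OF c])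
      also have "\<dots> \<le> (c1 ?p + c2 ?p) * (e / 2) + e / 4"
        using err1 err2 \<eta>(2) by (simp add: algebra_simps)
      also have "\<dots> < e" using c(3) e by simp
      finally show ?thesis .
    qed
  qed
qed

section \<open>Finite-dimensional exhaustion of the space variable\<close>

definition orthonormal_upto :: "(nat \<Rightarrow> 'a::real_inner) \<Rightarrow> nat \<Rightarrow> bool" where
  "orthonormal_upto e n \<longleftrightarrow>
    (\<forall>i<n. \<forall>j<n. i \<noteq> j \<longrightarrow> inner (e i) (e j) = 0) \<and> (\<forall>i<n. e i = 0 \<or> norm (e i) = 1)"

definition proj :: "(nat \<Rightarrow> 'a::real_inner) \<Rightarrow> nat \<Rightarrow> 'a \<Rightarrow> 'a" where
  "proj e n x = (\<Sum>i<n. inner x (e i) *\<^sub>R e i)"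

lemma proj_in_span: "proj e n x \<in> span (e ` {..<n})"
  unfolding proj_def by (intro span_sum span_scale span_base) auto

lemma proj_inner_member:
  assumes "orthonormal_upto e n" "j < n"
  shows "inner (proj e n x) (e j) = inner x (e j)"
proof -
  have "inner (proj e n x) (e j) = (\<Sum>i<n. inner x (e i) * inner (e i) (e j))"
    by (simp add: proj_def inner_sum_left)
  also have "\<dots> = (\<Sum>i\<in>{j}. inner x (e i) * inner (e i) (e j))"
    using assms by (intro sum.mono_neutral_right) (auto simp: orthonormal_upto_def)
  also have "\<dots> = inner x (e j)"
    using assms by (simp, auto simp: orthonormal_upto_def power2_norm_eq_inner[symmetric])
  finally show ?thesis .
qed

lemma proj_inner_span:
  assumes "orthonormal_upto e n" "a \<in> span (e ` {..<n})"
  shows "inner (proj e n x) a = inner x a"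
proof -
  have "subspace {a. inner (x - proj e n x) a = 0}"
    by (simp add: subspace_def inner_add_right)
  moreover have "e ` {..<n} \<subseteq> {a. inner (x - proj e n x) a = 0}"
    using proj_inner_member[OF assms(1)] by (auto simp: inner_diff_left)
  ultimately have "inner (x - proj e n x) a = 0"
    using assms(2) span_minimal by blast
  then show ?thesis by (simp add: inner_diff_left)
qed

lemma proj_best_approximation:
  assumes "orthonormal_upto e n" "y \<in> span (e ` {..<n})"
  shows "norm (x - proj e n x) \<le> norm (x - y)"
proof -
  have "proj e n x - y \<in> span (e ` {..<n})" by (rule span_diff[OF proj_in_span assms(2)])
  then have "orthogonal (x - proj e n x) (proj e n x - y)"
    using proj_inner_span[OF assms(1)] by (simp add: orthogonal_def inner_diff_left)
  then have "(norm (x - y))\<^sup>2 = (norm (x - proj e n x))\<^sup>2 + (norm (proj e n x - y))\<^sup>2"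
    using norm_add_Pythagorean by fastforce
  then show ?thesis by (simp add: power2_le_imp_le)
qed

text \<open>The \<open>k\<close>-th Gram--Schmidt vector: the normalised component of \<open>d k\<close> orthogonal to all
  previous ones (or \<open>0\<close> if \<open>d k\<close> lies in their span).\<close>
function gram_schmidt :: "(nat \<Rightarrow> 'a::real_inner) \<Rightarrow> nat \<Rightarrow> 'a" where
  "gram_schmidt d k = sgn (d k - (\<Sum>j<k. inner (d k) (gram_schmidt d j) *\<^sub>R gram_schmidt d j))"
  by auto
termination by (relation "Wellfounded.measure (\<lambda>(d, k). k)") auto

declare gram_schmidt.simps [simp del]

lemma gram_schmidt_eq: "gram_schmidt d k = sgn (d k - proj (gram_schmidt d) k (d k))"
  unfolding proj_def by (rule gram_schmidt.simps)

lemma gram_schmidt_orthonormal: "orthonormal_upto (gram_schmidt d) n"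
proof (induction n)
  case (Suc n)
  let ?e = "gram_schmidt d"
  have new: "inner (?e n) (?e j) = 0" if "j < n" for j
    using proj_inner_member[OF Suc.IH that, of "d n"]
    by (simp add: gram_schmidt_eq[of d n] sgn_div_norm inner_diff_left)
  have "?e n = 0 \<or> norm (?e n) = 1" by (simp add: gram_schmidt_eq[of d n] norm_sgn)
  moreover have "inner (?e i) (?e j) = 0" if ij: "i < Suc n" "j < Suc n" "i \<noteq> j" for i j
  proof -
    consider "i < n" "j < n" | "i = n" "j < n" | "j = n" "i < n" using ij by linarith
    then show ?thesis
      by cases (use Suc.IH new[of j] new[of i] ij in \<open>auto simp: orthonormal_upto_def inner_commute\<close>)
  qed
  ultimately show ?case using Suc.IH unfolding orthonormal_upto_def by (metis less_SucE)
qed (simp add: orthonormal_upto_def)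

lemma gram_schmidt_in_subspace:
  assumes "subspace D" "range d \<subseteq> D"
  shows "gram_schmidt d k \<in> D"
proof (induction k rule: less_induct)
  case (less k)
  have "d k - proj (gram_schmidt d) k (d k) \<in> D"
    unfolding proj_def using assms less by (intro subspace_diff subspace_sum subspace_scale) auto
  then show ?case unfolding gram_schmidt_eq[of d k] sgn_div_norm by (rule subspace_scale[OF assms(1)])
qed

lemma gram_schmidt_span: "d k \<in> span (gram_schmidt d ` {..<Suc k})"
proof -
  define r where "r = d k - proj (gram_schmidt d) k (d k)"
  have "gram_schmidt d k = sgn r" unfolding r_def by (rule gram_schmidt_eq)
  then have "r = norm r *\<^sub>R gram_schmidt d k" by (cases "r = 0") (simp_all add: sgn_div_norm)
  moreover have "gram_schmidt d k \<in> gram_schmidt d ` {..<Suc k}" by simp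
  ultimately have "r \<in> span (gram_schmidt d ` {..<Suc k})" by (metis span_base span_scale)
  moreover have "gram_schmidt d ` {..<k} \<subseteq> gram_schmidt d ` {..<Suc k}" by auto
  then have "proj (gram_schmidt d) k (d k) \<in> span (gram_schmidt d ` {..<Suc k})"
    by (rule subsetD[OF span_mono proj_in_span])
  ultimately have "r + proj (gram_schmidt d) k (d k) \<in> span (gram_schmidt d ` {..<Suc k})"
    by (rule span_add)
  then show ?thesis by (simp add: r_def)
qed

definition coeff_box :: "(nat \<Rightarrow> 'a::real_normed_vector) \<Rightarrow> real \<Rightarrow> nat \<Rightarrow> 'a set" where
  "coeff_box e R n = {(\<Sum>i<n. c i *\<^sub>R e i) | c. \<forall>i<n. \<bar>c i\<bar> \<le> R}"

text \<open>Each box is the image of the previous one times an interval, hence compact by induction.\<close>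
lemma coeff_box_Suc:
  "coeff_box e R (Suc n) = (\<lambda>(y, r). y + r *\<^sub>R e n) ` (coeff_box e R n \<times> {-R..R})"
proof (intro equalityI subsetI)
  fix z assume "z \<in> coeff_box e R (Suc n)"
  then obtain c where c: "z = (\<Sum>i<Suc n. c i *\<^sub>R e i)" "\<forall>i<Suc n. \<bar>c i\<bar> \<le> R"
    by (auto simp: coeff_box_def)
  have "(\<Sum>i<n. c i *\<^sub>R e i) \<in> coeff_box e R n" "c n \<in> {-R..R}"
    using c(2) by (auto simp: coeff_box_def abs_le_iff)
  then show "z \<in> (\<lambda>(y, r). y + r *\<^sub>R e n) ` (coeff_box e R n \<times> {-R..R})"
    using c(1) by (auto intro!: image_eqI[of _ _ "(\<Sum>i<n. c i *\<^sub>R e i, c n)"])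
next
  fix z assume "z \<in> (\<lambda>(y, r). y + r *\<^sub>R e n) ` (coeff_box e R n \<times> {-R..R})"
  then obtain y r where yr: "y \<in> coeff_box e R n" "r \<in> {-R..R}" "z = y + r *\<^sub>R e n" by auto
  then obtain c where "\<forall>i<n. \<bar>c i\<bar> \<le> R" "y = (\<Sum>i<n. c i *\<^sub>R e i)"
    by (auto simp: coeff_box_def)
  then have c: "\<forall>i<n. \<bar>c i\<bar> \<le> R" "\<bar>r\<bar> \<le> R" "z = (\<Sum>i<n. c i *\<^sub>R e i) + r *\<^sub>R e n"
    using yr(2,3) by auto
  have "(\<Sum>i<n. (c(n := r)) i *\<^sub>R e i) = (\<Sum>i<n. c i *\<^sub>R e i)" by (intro sum.cong) auto
  then have "z = (\<Sum>i<Suc n. (c(n := r)) i *\<^sub>R e i)" using c(3) by simp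
  moreover have "\<forall>i<Suc n. \<bar>(c(n := r)) i\<bar> \<le> R" using c(1,2) by (auto simp: less_Suc_eq)
  ultimately show "z \<in> coeff_box e R (Suc n)" unfolding coeff_box_def mem_Collect_eq
    by (intro exI[of _ "c(n := r)"] conjI)
qed

lemma coeff_box_compact: "compact (coeff_box e R n)"
proof (induction n)
  case 0
  then show ?case by (simp add: coeff_box_def)
next
  case (Suc n)
  have "continuous_on (coeff_box e R n \<times> {-R..R}) (\<lambda>(y, r). y + r *\<^sub>R e n)"
    unfolding case_prod_unfold by (intro continuous_intros)
  then show ?case unfolding coeff_box_Suc
    by (intro compact_continuous_image compact_Times Suc compact_Icc)
qed

lemma coeff_box_subset_span: "coeff_box e R n \<subseteq> span (e ` {..<n})"
proof
  fix z assume "z \<in> coeff_box e R n"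
  then obtain c where "z = (\<Sum>i<n. c i *\<^sub>R e i)" by (auto simp: coeff_box_def)
  moreover have "(\<Sum>i<n. c i *\<^sub>R e i) \<in> span (e ` {..<n})"
    by (rule span_sum, rule span_scale, rule span_base) auto
  ultimately show "z \<in> span (e ` {..<n})" by simp
qed

lemma proj_in_coeff_box:
  assumes "orthonormal_upto e n" "norm x \<le> R"
  shows "proj e n x \<in> coeff_box e R n"
proof -
  have "\<bar>inner x (e i)\<bar> \<le> R" if "i < n" for i
  proof -
    have "\<bar>inner x (e i)\<bar> \<le> norm x * norm (e i)" by (rule Cauchy_Schwarz_ineq2)
    also have "\<dots> \<le> norm x * 1"
      using assms(1) that by (intro mult_left_mono) (auto simp: orthonormal_upto_def)
    finally show ?thesis using assms(2) by simp
  qed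
  then show ?thesis unfolding proj_def coeff_box_def mem_Collect_eq
    by (intro exI[of _ "\<lambda>i. inner x (e i)"]) auto
qed

lemma dense_sequence:
  fixes D :: "'a::{metric_space, second_countable_topology} set"
  assumes "closure D = UNIV"
  obtains d :: "nat \<Rightarrow> 'a" where "range d \<subseteq> D" "closure (range d) = UNIV"
proof -
  obtain E where E: "countable E" "E \<subseteq> D" "D \<subseteq> closure E" by (rule separable)
  then have "closure E = UNIV" using closure_mono[OF E(3)] assms by auto
  then have "E \<noteq> {}" by auto
  then show thesis using E by (intro that[of "from_nat_into E"]) (simp_all add: \<open>closure E = UNIV\<close>)
qed

lemma proj_tendsto:
  assumes "\<And>n. orthonormal_upto e n" "closure (range d) = UNIV" "\<And>k. d k \<in> span (e ` {..<Suc k})"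
  shows "(\<lambda>n. proj e n x) \<longlonglongrightarrow> x"
proof (rule LIMSEQ_I)
  fix r :: real assume "r > 0"
  then obtain k where k: "dist (d k) x < r"
    using assms(2) closure_approachable[of x "range d"] by auto
  have "norm (proj e n x - x) < r" if "n \<ge> Suc k" for n
  proof -
    have "e ` {..<Suc k} \<subseteq> e ` {..<n}" using that by auto
    then have "d k \<in> span (e ` {..<n})" by (rule subsetD[OF span_mono assms(3)])
    then have "norm (x - proj e n x) \<le> norm (x - d k)" by (rule proj_best_approximation[OF assms(1)])
    then show ?thesis using k by (simp add: dist_norm norm_minus_commute)
  qed
  then show "\<exists>N. \<forall>n\<ge>N. norm (proj e n x - x) < r" by blast
qed

lemma finite_dimensional_exhaustion:
  fixes D :: "'h::{real_inner, second_countable_topology} set"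
  assumes D: "subspace D" "closure D = UNIV"
  obtains A :: "nat \<Rightarrow> 'h set" and C :: "nat \<Rightarrow> 'h set" and P :: "nat \<Rightarrow> 'h \<Rightarrow> 'h" where
    "\<And>n. subspace (A n)" "\<And>n. A n \<subseteq> D" "\<And>n. compact (C n)" "\<And>n. C n \<subseteq> A n"
    "\<And>n x a. a \<in> A n \<Longrightarrow> inner (P n x) a = inner x a"
    "\<And>x. (\<lambda>n. P n x) \<longlonglongrightarrow> x"
    "\<And>x. eventually (\<lambda>n. P n x \<in> C n) sequentially"
proof -
  obtain d :: "nat \<Rightarrow> 'h" where d: "range d \<subseteq> D" "closure (range d) = UNIV"
    using dense_sequence[OF D(2)] by blast
  define e where "e = gram_schmidt d"
  have e: "orthonormal_upto e n" for n unfolding e_def by (rule gram_schmidt_orthonormal)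
  show thesis
  proof (rule that[of "\<lambda>n. span (e ` {..<n})" "\<lambda>n. coeff_box e (real n) n" "proj e"])
    show "subspace (span (e ` {..<n}))" for n by (rule subspace_span)
    show "span (e ` {..<n}) \<subseteq> D" for n
    proof (rule span_minimal[OF _ D(1)])
      show "e ` {..<n} \<subseteq> D" using gram_schmidt_in_subspace[OF D(1) d(1)] by (auto simp: e_def)
    qed
    show "compact (coeff_box e (real n) n)" for n by (rule coeff_box_compact)
    show "coeff_box e (real n) n \<subseteq> span (e ` {..<n})" for n by (rule coeff_box_subset_span)
    show "a \<in> span (e ` {..<n}) \<Longrightarrow> inner (proj e n x) a = inner x a" for n x a
      by (rule proj_inner_span[OF e])
    show "(\<lambda>n. proj e n x) \<longlonglongrightarrow> x" for x
      by (rule proj_tendsto[OF e d(2)]) (simp add: e_def gram_schmidt_span)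
    show "eventually (\<lambda>n. proj e n x \<in> coeff_box e (real n) n) sequentially" for x
    proof (rule eventually_sequentiallyI)
      fix n assume "nat \<lceil>norm x\<rceil> \<le> n"
      then have "norm x \<le> real n" by linarith
      then show "proj e n x \<in> coeff_box e (real n) n" by (rule proj_in_coeff_box[OF e])
    qed
  qed
qed

lemma diagonal_convergence:
  fixes f :: "'a::t2_space \<Rightarrow> real"
  assumes "isCont f x" "(\<lambda>n. P n) \<longlonglongrightarrow> x" "\<epsilon> \<longlonglongrightarrow> 0"
    and "eventually (\<lambda>n. u n x = u n (P n) \<and> \<bar>u n (P n) - f (P n)\<bar> \<le> \<epsilon> n) sequentially"
  shows "(\<lambda>n. u n x) \<longlonglongrightarrow> f x"
proof -
  have "(\<lambda>n. u n x - f (P n)) \<longlonglongrightarrow> 0"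
    using assms(4) by (intro Lim_null_comparison[OF _ assms(3)]) (auto elim: eventually_mono)
  moreover have "(\<lambda>n. f (P n)) \<longlonglongrightarrow> f x" by (rule isCont_tendsto_compose[OF assms(1,2)])
  ultimately have "(\<lambda>n. (u n x - f (P n)) + f (P n)) \<longlonglongrightarrow> 0 + f x" by (rule tendsto_add)
  then show ?thesis by simp
qed

lemma Cb_star_le_SUP:
  assumes "f \<in> Cb_star T"
  shows "\<bar>f p\<bar> \<le> (SUP q. \<bar>f q\<bar>)"
proof -
  obtain B where "\<And>q. \<bar>f q\<bar> \<le> B" using assms by (auto simp: Cb_star_def bounded_real)
  then show ?thesis by (intro cSUP_upper bdd_aboveI2) auto
qed

text \<open>The theorem for any continuous, \<open>T\<close>-periodic \<open>f\<close> bounded by \<open>M\<close>: choose \<open>u\<^sub>n\<close> in the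
  algebra with frequencies in \<open>A\<^sub>n\<close>, within \<open>1/(n+1)\<close> of \<open>f\<close> on \<open>\<real> \<times> C\<^sub>n\<close>.\<close>
lemma pointwise_approximation_in_K:
  fixes D :: "'h::{real_inner, second_countable_topology} set" and f :: "real \<times> 'h \<Rightarrow> real"
  assumes T: "T > 0" and D: "subspace D" "closure D = UNIV"
    and f: "continuous_on UNIV f" "\<And>p. \<bar>f p\<bar> \<le> M" "\<And>t x. f (t + T, x) = f (t, x)"
  obtains u where "\<And>n. u n \<in> K_set T D" "\<And>p. (\<lambda>n. u n p) \<longlonglongrightarrow> f p" "\<And>n p. \<bar>u n p\<bar> \<le> M + 1"
proof -
  obtain A C P where A: "\<And>n. subspace (A n)" "\<And>n. A n \<subseteq> D" "\<And>n. compact (C n)" "\<And>n. C n \<subseteq> A n"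
    and P: "\<And>n x a. a \<in> A n \<Longrightarrow> inner (P n x) a = inner x a" "\<And>x. (\<lambda>n. P n x) \<longlonglongrightarrow> x"
      "\<And>x. eventually (\<lambda>n. P n x \<in> C n) sequentially"
    using finite_dimensional_exhaustion[OF D] by blast
  have "\<exists>w. w \<in> trig_alg T (A n) \<and> (\<forall>p. \<bar>w p\<bar> \<le> M + 1) \<and>
      (\<forall>t x. x \<in> C n \<longrightarrow> \<bar>w (t, x) - f (t, x)\<bar> < inverse (Suc n))" for n
    using approx_uniform_in_time[OF T A(1)[of n] A(3)[of n] A(4)[of n] f, of "inverse (Suc n)"]
    by (metis inverse_positive_iff_positive of_nat_0_less_iff zero_less_Suc)
  then obtain u where u: "\<And>n. u n \<in> trig_alg T (A n)" "\<And>n p. \<bar>u n p\<bar> \<le> M + 1"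
    "\<And>n t x. x \<in> C n \<Longrightarrow> \<bar>u n (t, x) - f (t, x)\<bar> < inverse (Suc n)"
    by metis
  have convergence: "(\<lambda>n. u n (t, x)) \<longlonglongrightarrow> f (t, x)" for t x
  proof (rule diagonal_convergence[where P = "\<lambda>n. (t, P n x)"])
    show "isCont f (t, x)" using f(1) by (simp add: continuous_on_eq_continuous_at)
    show "(\<lambda>n. (t, P n x)) \<longlonglongrightarrow> (t, x)" by (intro tendsto_Pair tendsto_const P(2))
    show "(\<lambda>n. inverse (real (Suc n))) \<longlonglongrightarrow> 0" by (rule LIMSEQ_inverse_real_of_nat)
    show "eventually (\<lambda>n. u n (t, x) = u n (t, P n x) \<and>
        \<bar>u n (t, P n x) - f (t, P n x)\<bar> \<le> inverse (real (Suc n))) sequentially"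
      using P(3)[of x] by eventually_elim
        (use trig_alg_props(4)[OF T u(1)] P(1) u(3) in \<open>auto intro: less_imp_le\<close>)
  qed
  show thesis
  proof
    show "u n \<in> K_set T D" for n using trig_alg_subset_K_set[OF A(2)] u(1) by blast
    show "(\<lambda>n. u n p) \<longlonglongrightarrow> f p" for p using convergence[of "fst p" "snd p"] by simp
    show "\<bar>u n p\<bar> \<le> M + 1" for n p by (rule u(2))
  qed
qed

theorem mainTheorem19:
  fixes T :: real
    and D :: "'h::{real_inner, complete_space, second_countable_topology} set"
    and f :: "real \<times> 'h \<Rightarrow> real"
  assumes "T > 0"
    and "subspace D"
    and "closure D = UNIV"
    and "f \<in> Cb_star T"
  shows "\<exists>u :: nat \<Rightarrow> real \<times> 'h \<Rightarrow> real.
           (\<forall>n. u n \<in> K_set T D) \<and>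
           (\<forall>p. (\<lambda>n. u n p) \<longlonglongrightarrow> f p) \<and>
           (\<forall>n p. \<bar>u n p\<bar> \<le> 1 + (SUP q. \<bar>f q\<bar>))"
proof -
  define M where "M = (SUP q. \<bar>f q\<bar>)"
  have f: "continuous_on UNIV f" "\<And>p. \<bar>f p\<bar> \<le> M" "\<And>t x. f (t + T, x) = f (t, x)"
    using assms(4) Cb_star_le_SUP unfolding M_def Cb_star_def by auto
  obtain u where "\<And>n. u n \<in> K_set T D" "\<And>p. (\<lambda>n. u n p) \<longlonglongrightarrow> f p" "\<And>n p. \<bar>u n p\<bar> \<le> M + 1"
    using pointwise_approximation_in_K[OF assms(1-3) f] by blast
  then show ?thesis unfolding M_def by (intro exI[of _ u]) (simp add: add.commute)
qed

end
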